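(* Each of the following functions $\varrho:\mathbb{R}\to\mathbb{R}$ is continuous and increasing, is differentiable at some $x_0$ with $\varrho'(x_0)\neq0$, is differentiable on $(-\infty,-r)\cup(r,\infty)$ for some $r>0$, and moreover either is bounded, or there are $\lambda,\lambda'\ge0$ with $\lambda\neq\lambda'$ such that $\varrho'(x)\to\lambda$ as $x\to\infty$ and $\varrho'(x)\to\lambda'$ as $x\to-\infty$: the ReLU $\max\{0,x\}$; the parametric ReLU $\max\{ax,x\}$ with $a\ge0$, $a\ne1$; the exponential linear unit $x\chi_{x\ge0}(x)+(e^x-1)\chi_{x<0}(x)$; the softsign $x/(1+|x|)$; the inverse square root linear unit $x\chi_{x\ge0}(x)+\frac{x}{\sqrt{1+ax^2}}\chi_{x<0}(x)$ with $a>0$; the inverse square root unit $x/\sqrt{1+ax^2}$ with $a>0$; the sigmoid $1/(1+e^{-x})$; $\tanh$; $\arctan$; and the softplus $\ln(1+e^x)$. Consequently, for each such $\varrho$, every $B>0$, every finite Borel measure $\mu$ on $[-B,B]^d$ with uncountable support, and every architecture $S=(d,N_1,\dots,N_{L-1},1)$ with $L\ge2$ and with $N_{L-1}\ge1$ if $\varrho$ is bounded and $N_{L-1}\ge 2$ otherwise, the set $\mathcal{RNN}_\varrho^{[-B,B]^d}(S)$ is not closed in $L^p(\mu)$ for any $p\in(0,\infty)$.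
   Context: A neural network with architecture $S=(N_0,\dots,N_L)$ ($N_0=d$) is a family $\Phi=((A_\ell,b_\ell))_{\ell=1}^L$, $A_\ell\in\mathbb{R}^{N_\ell\times N_{\ell-1}}$, $b_\ell\in\mathbb{R}^{N_\ell}$; $\mathcal{NN}(S)$ is the set of these. For $\varrho:\mathbb{R}\to\mathbb{R}$ and $\Omega\subset\mathbb{R}^d$, $\mathrm{R}_\varrho^\Omega(\Phi):\Omega\to\mathbb{R}^{N_L}$, $x\mapsto x_L$, where $x_0=x$, $x_\ell=\varrho(A_\ell x_{\ell-1}+b_\ell)$ for $1\le\ell\le L-1$ (componentwise), $x_L=A_Lx_{L-1}+b_L$; $\mathcal{RNN}_\varrho^\Omega(S)=\{\mathrm{R}_\varrho^\Omega(\Phi):\Phi\in\mathcal{NN}(S)\}$. *)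

theory Defs
  imports "HOL-Analysis.Analysis"
begin

definition relu :: "real \<Rightarrow> real" where
  "relu x = max 0 x"

definition prelu :: "real \<Rightarrow> real \<Rightarrow> real" where
  "prelu a x = max (a * x) x"

definition elu :: "real \<Rightarrow> real" where
  "elu x = (if x \<ge> 0 then x else exp x - 1)"

definition softsign :: "real \<Rightarrow> real" where
  "softsign x = x / (1 + \<bar>x\<bar>)"

definition isrlu :: "real \<Rightarrow> real \<Rightarrow> real" where
  "isrlu a x = (if x \<ge> 0 then x else x / sqrt (1 + a * x\<^sup>2))"

definition isru :: "real \<Rightarrow> real \<Rightarrow> real" where
  "isru a x = x / sqrt (1 + a * x\<^sup>2)"

definition sigmoid :: "real \<Rightarrow> real" where
  "sigmoid x = 1 / (1 + exp (- x))"

definition softplus :: "real \<Rightarrow> real" where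
  "softplus x = ln (1 + exp x)"

definition listed_activations :: "(real \<Rightarrow> real) set" where
  "listed_activations =
     {relu, elu, softsign, sigmoid, tanh, arctan, softplus}
     \<union> {prelu a | a. a \<ge> 0 \<and> a \<noteq> 1}
     \<union> {isrlu a | a. a > 0}
     \<union> {isru a | a. a > 0}"

definition admissible_activation :: "(real \<Rightarrow> real) \<Rightarrow> bool" where
  "admissible_activation \<rho> \<longleftrightarrow>
     continuous_on UNIV \<rho> \<and> mono \<rho> \<and>
     (\<exists>x0 D. (\<rho> has_real_derivative D) (at x0) \<and> D \<noteq> 0) \<and>
     (\<exists>r>0. \<forall>x. \<bar>x\<bar> > r \<longrightarrow> \<rho> differentiable (at x)) \<and>
     (bounded (range \<rho>) \<or>
      (\<exists>l1 l2. l1 \<ge> 0 \<and> l2 \<ge> 0 \<and> l1 \<noteq> l2 \<and>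
         ((deriv \<rho>) \<longlongrightarrow> l1) at_top \<and> ((deriv \<rho>) \<longlongrightarrow> l2) at_bot))"

text \<open>A layer (A, b) between hidden layers: A is indexed (i,j) with i < N_l, j < N_(l-1);
  b indexed by i < N_l. Entries outside these ranges are irrelevant.
  The first layer has weights indexed by (i, k) with i < N_1 and k :: 'd ranging over
  the coordinates of the input space R^d = real^'d (d = CARD('d)).\<close>

type_synonym layer = "(nat \<Rightarrow> nat \<Rightarrow> real) \<times> (nat \<Rightarrow> real)"
type_synonym 'd network = "((nat \<Rightarrow> 'd \<Rightarrow> real) \<times> (nat \<Rightarrow> real)) \<times> layer list"

text \<open>apply_layers rho ns ls v: ns lists the input widths of the layers in ls;
  the activation is applied after every layer except the last one.\<close>
fun apply_layers :: "(real \<Rightarrow> real) \<Rightarrow> nat list \<Rightarrow> layer list \<Rightarrow> (nat \<Rightarrow> real) \<Rightarrow> (nat \<Rightarrow> real)" where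
  "apply_layers \<rho> (n # ns) ((A, b) # ls) v =
     (let w = (\<lambda>i. (\<Sum>j<n. A i j * v j) + b i)
      in if ls = [] then w else apply_layers \<rho> ns ls (\<lambda>i. \<rho> (w i)))"
| "apply_layers \<rho> _ _ v = v"

text \<open>Realization of a network with architecture (d, Ns!0, ..., last Ns, 1), i.e.
  L = length Ns + 1 layers (requires Ns nonempty, i.e. L \<ge> 2); the scalar output is
  component 0 of the output vector in R^1.\<close>
definition realize :: "(real \<Rightarrow> real) \<Rightarrow> nat list \<Rightarrow> 'd::finite network \<Rightarrow> real^'d \<Rightarrow> real" where
  "realize \<rho> Ns \<Phi> x =
     (let ((A1, b1), ls) = \<Phi>;
          h1 = (\<lambda>i. \<rho> ((\<Sum>k\<in>UNIV. A1 i k * x $ k) + b1 i))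
      in apply_layers \<rho> Ns ls h1 0)"

definition RNN :: "(real \<Rightarrow> real) \<Rightarrow> nat list \<Rightarrow> (real^'d::finite \<Rightarrow> real) set" where
  "RNN \<rho> Ns = {realize \<rho> Ns \<Phi> | \<Phi>. length (snd \<Phi>) = length Ns}"

definition cube :: "real \<Rightarrow> (real^'d::finite) set" where
  "cube B = {x. \<forall>i. \<bar>x $ i\<bar> \<le> B}"

definition support :: "'a::topological_space measure \<Rightarrow> 'a set" where
  "support \<mu> = {x. \<forall>U. open U \<and> x \<in> U \<longrightarrow> emeasure \<mu> U > 0}"

text \<open>F is closed in L^p(mu) (0 < p < \<infinity>): every L^p-limit of a sequence in F coincides
  mu-a.e. with an element of F. (For p < 1 the topology is given by the metric
  \<integral>|f-g|^p; in all cases it is metrizable, so sequential closedness is closedness.)\<close>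
definition Lp_closed :: "'a measure \<Rightarrow> real \<Rightarrow> ('a \<Rightarrow> real) set \<Rightarrow> bool" where
  "Lp_closed \<mu> p F \<longleftrightarrow>
     (\<forall>g f. (\<forall>n. g n \<in> F) \<longrightarrow> f \<in> borel_measurable \<mu> \<longrightarrow>
        (\<integral>\<^sup>+ x. ennreal (\<bar>f x\<bar> powr p) \<partial>\<mu>) < \<infinity> \<longrightarrow>
        ((\<lambda>n. \<integral>\<^sup>+ x. ennreal (\<bar>g n x - f x\<bar> powr p) \<partial>\<mu>) \<longlonglongrightarrow> 0) \<longrightarrow>
        (\<exists>h\<in>F. AE x in \<mu>. h x = f x))"

end

theory Submission
  imports Defs "HOL-Real_Asymp.Real_Asymp"
begin

text \<open>Let \<open>G\<close> be a combination of at most two neurons with different limits at \<open>+\<infinity>\<close> and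
  \<open>-\<infinity>\<close>: \<open>G = \<rho>\<close> if \<open>\<rho>\<close> is bounded (monotone limits), and \<open>G y = \<rho> (y + 1) - \<rho> y\<close> otherwise
  (by the mean value theorem its limits are those of \<open>\<rho>'\<close>). As \<open>\<rho>' x\<^sub>0 \<noteq> 0\<close> and \<open>\<rho>\<close> is monotone,
  \<open>\<sigma> t = \<rho> (t + x\<^sub>0) - \<rho> x\<^sub>0\<close> preserves signs, so hidden layers can pass on the sign of \<open>x\<^sub>i - c\<close>,
  and \<open>x \<mapsto> G (n \<sigma>\<^bsup>L-2\<^esup> (x\<^sub>i - c))\<close> is a realization. As \<open>n \<rightarrow> \<infinity>\<close> these functions converge
  boundedly, hence in \<open>L\<^sup>p(\<mu>)\<close>, to a step function jumping across the hyperplane \<open>x\<^sub>i = c\<close>.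
  Choosing \<open>c = y\<^sub>i\<close> for a point \<open>y\<close> of the uncountable support that the support approaches
  from both sides in the \<open>i\<close>-th coordinate, no continuous function, in particular no
  realization, agrees with this step function almost everywhere.\<close>

lemma continuous_on_apply_layers:
  fixes v :: "'a::topological_space \<Rightarrow> nat \<Rightarrow> real"
  assumes \<rho>: "continuous_on UNIV \<rho>" and v: "\<And>i. continuous_on UNIV (\<lambda>x. v x i)"
  shows "continuous_on UNIV (\<lambda>x. apply_layers \<rho> ns ls (v x) i)"
  using v
proof (induction ns arbitrary: ls v i)
  case Nil
  then show ?case by simp
next
  case (Cons m ns)
  show ?case
  proof (cases ls)
    case Nil
    then show ?thesis using Cons.prems by simp
  next
    case (Cons l ls')
    obtain A b where l: "l = (A, b)" by fastforce
    have pre: "\<And>i. continuous_on UNIV (\<lambda>x. (\<Sum>j<m. A i j * v x j) + b i)"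
      using Cons.prems by (intro continuous_intros) auto
    show ?thesis
    proof (cases "ls' = []")
      case True
      then show ?thesis using pre by (simp add: Cons l)
    next
      case False
      have "\<And>i. continuous_on UNIV (\<lambda>x. \<rho> ((\<Sum>j<m. A i j * v x j) + b i))"
        by (rule continuous_on_compose2[OF \<rho> pre]) auto
      then have "continuous_on UNIV
          (\<lambda>x. apply_layers \<rho> ns ls' (\<lambda>i. \<rho> ((\<Sum>j<m. A i j * v x j) + b i)) i)"
        by (rule Cons.IH)
      then show ?thesis using False by (simp add: Cons l Let_def)
    qed
  qed
qed

lemma continuous_on_realize:
  assumes \<rho>: "continuous_on UNIV \<rho>"
  shows "continuous_on UNIV (realize \<rho> Ns \<Phi>)"
proof -
  obtain A1 b1 ls where \<Phi>: "\<Phi> = ((A1, b1), ls)" by (metis prod.collapse)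
  have "\<And>i. continuous_on UNIV (\<lambda>x::real^'a. \<rho> ((\<Sum>k\<in>UNIV. A1 i k * x $ k) + b1 i))"
    by (rule continuous_on_compose2[OF \<rho>]) (auto intro!: continuous_intros)
  then show ?thesis
    unfolding \<Phi> realize_def by (simp add: continuous_on_apply_layers[OF \<rho>])
qed

lemma RNN_continuous: "continuous_on UNIV \<rho> \<Longrightarrow> h \<in> RNN \<rho> Ns \<Longrightarrow> continuous_on UNIV h"
  unfolding RNN_def using continuous_on_realize by blast

lemma realize_in_RNN: "length ls = length Ns \<Longrightarrow> realize \<rho> Ns (L1, ls) \<in> RNN \<rho> Ns"
  unfolding RNN_def by (cases L1) auto

definition coord_input :: "'d \<Rightarrow> real \<Rightarrow> (nat \<Rightarrow> real) \<Rightarrow> (nat \<Rightarrow> 'd \<Rightarrow> real) \<times> (nat \<Rightarrow> real)" where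
  "coord_input coord \<alpha> \<beta> = (\<lambda>i k. if k = coord then \<alpha> else 0, \<beta>)"

definition coord_layer :: "real \<Rightarrow> (nat \<Rightarrow> real) \<Rightarrow> layer" where
  "coord_layer \<alpha> \<beta> = (\<lambda>i j. if j = 0 then \<alpha> else 0, \<beta>)"

definition readout :: "real \<Rightarrow> real \<Rightarrow> layer" where
  "readout w0 w1 = (\<lambda>i j. if j = 0 then w0 else if j = 1 then w1 else 0, \<lambda>i. 0)"

lemma realize_coord_input:
  fixes x :: "real^'d::finite"
  shows "realize \<rho> Ns (coord_input coord \<alpha> \<beta>, ls) x
    = apply_layers \<rho> Ns ls (\<lambda>i. \<rho> (\<alpha> * x $ coord + \<beta> i)) 0"
proof -
  have "(\<Sum>k\<in>UNIV. (if k = coord then \<alpha> else 0) * x $ k)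
      = (\<Sum>k\<in>UNIV. if k = coord then \<alpha> * x $ coord else 0)"
    by (rule sum.cong) auto
  then have "(\<Sum>k\<in>UNIV. (if k = coord then \<alpha> else 0) * x $ k) = \<alpha> * x $ coord"
    by simp
  then show ?thesis by (simp add: realize_def coord_input_def)
qed

lemma apply_layers_coord_layer:
  assumes "m \<ge> 1" "ls \<noteq> []"
  shows "apply_layers \<rho> (m # ms) (coord_layer \<alpha> \<beta> # ls) v
    = apply_layers \<rho> ms ls (\<lambda>i. \<rho> (\<alpha> * v 0 + \<beta> i))"
proof -
  have "(\<Sum>j<m. (if j = 0 then \<alpha> else 0) * v j) = (\<Sum>j<m. if j = 0 then \<alpha> * v 0 else 0)"
    by (rule sum.cong) auto
  then have "(\<Sum>j<m. (if j = 0 then \<alpha> else 0) * v j) = \<alpha> * v 0"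
    using assms(1) by simp
  then show ?thesis using assms(2) by (simp add: coord_layer_def)
qed

lemma apply_layers_readout:
  assumes "m \<ge> 1" "m \<ge> 2 \<or> w1 = 0"
  shows "apply_layers \<rho> [m] [readout w0 w1] v 0 = w0 * v 0 + w1 * v 1"
proof -
  have "(\<Sum>j<m. (if j = 0 then w0 else if j = 1 then w1 else 0) * v j)
      = (\<Sum>j<m. (if j = 0 then w0 * v 0 else 0) + (if j = 1 then w1 * v 1 else 0))"
    by (rule sum.cong) auto
  also have "\<dots> = w0 * v 0 + w1 * v 1" using assms by (auto simp add: sum.distrib sum.delta)
  finally show ?thesis by (simp add: readout_def)
qed

definition two_neuron :: "(real \<Rightarrow> real) \<Rightarrow> real \<Rightarrow> real \<Rightarrow> real \<Rightarrow> real \<Rightarrow> real \<Rightarrow> real" where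
  "two_neuron \<rho> w0 e0 w1 e1 y = w0 * \<rho> (y + e0) + w1 * \<rho> (y + e1)"

definition recentred :: "(real \<Rightarrow> real) \<Rightarrow> real \<Rightarrow> real \<Rightarrow> real" where
  "recentred \<rho> x0 t = \<rho> (t + x0) - \<rho> x0"

lemma apply_layers_readout_two_neuron:
  assumes "m \<ge> 1" "m \<ge> 2 \<or> w1 = 0"
  shows "apply_layers \<rho> [m] [readout w0 w1] (\<lambda>i. \<rho> (y + (if i = 0 then e0 else e1))) 0
    = two_neuron \<rho> w0 e0 w1 e1 y"
  using assms by (simp add: apply_layers_readout two_neuron_def)

text \<open>Each relay layer maps its first unit \<open>u\<close> to \<open>\<rho> (u - \<rho> x0 + x0)\<close>, i.e. applies
  \<open>recentred \<rho> x0\<close> to the offset \<open>u - \<rho> x0\<close>; the last hidden layer holds the two neurons.\<close>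
lemma hidden_layers_two_neuron:
  assumes "length ns \<ge> 2" "\<forall>m\<in>set ns. m \<ge> 1" "last ns \<ge> 2 \<or> w1 = 0"
  shows "\<exists>ls. length ls = length ns \<and> (\<forall>v. apply_layers \<rho> ns ls v 0 =
           two_neuron \<rho> w0 e0 w1 e1 (a * (recentred \<rho> x0 ^^ (length ns - 2)) (v 0 - \<rho> x0)))"
  using assms
proof (induction ns)
  case Nil
  then show ?case by simp
next
  case (Cons m ms)
  show ?case
  proof (cases "length ms = 1")
    case True
    then obtain m2 where ms: "ms = [m2]" by (cases ms) auto
    define \<beta> where "\<beta> = (\<lambda>i::nat. (if i = 0 then e0 else e1) - a * \<rho> x0)"
    have "apply_layers \<rho> (m # ms) [coord_layer a \<beta>, readout w0 w1] v 0 =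
        two_neuron \<rho> w0 e0 w1 e1 (a * (v 0 - \<rho> x0))" for v
      using Cons.prems apply_layers_readout_two_neuron[of m2 w1 \<rho> w0 "a * (v 0 - \<rho> x0)" e0 e1]
      by (simp add: ms apply_layers_coord_layer \<beta>_def algebra_simps)
    then show ?thesis by (intro exI[of _ "[coord_layer a \<beta>, readout w0 w1]"]) (simp add: ms)
  next
    case False
    then have len: "length ms \<ge> 2" using Cons.prems by auto
    then obtain ls where ls: "length ls = length ms" and
      eq: "\<And>v. apply_layers \<rho> ms ls v 0 =
        two_neuron \<rho> w0 e0 w1 e1 (a * (recentred \<rho> x0 ^^ (length ms - 2)) (v 0 - \<rho> x0))"
      using Cons by (auto simp: Suc_le_eq)
    define relay where "relay = coord_layer 1 (\<lambda>i. x0 - \<rho> x0)"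
    have "ls \<noteq> []" "length (m # ms) - 2 = Suc (length ms - 2)" using ls len by auto
    then have "apply_layers \<rho> (m # ms) (relay # ls) v 0 = two_neuron \<rho> w0 e0 w1 e1
        (a * (recentred \<rho> x0 ^^ (length (m # ms) - 2)) (v 0 - \<rho> x0))" for v
      using Cons.prems
      by (simp add: relay_def apply_layers_coord_layer eq funpow_Suc_right recentred_def
          algebra_simps del: funpow.simps)
    then show ?thesis using ls by (intro exI[of _ "relay # ls"]) simp
  qed
qed

lemma two_neuron_recentred_in_RNN:
  fixes coord :: "'d::finite"
  assumes Ns: "Ns \<noteq> []" "\<forall>m\<in>set Ns. m \<ge> 1" "last Ns \<ge> 2 \<or> w1 = 0"
  shows "(\<lambda>x. two_neuron \<rho> w0 e0 w1 e1 (a * (recentred \<rho> x0 ^^ (length Ns - 1)) (x $ coord - c)))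
    \<in> RNN \<rho> Ns"
proof (cases "length Ns = 1")
  case True
  then obtain m where m: "Ns = [m]" by (cases Ns) auto
  define \<beta> where "\<beta> = (\<lambda>i::nat. (if i = 0 then e0 else e1) - a * c)"
  have "(\<lambda>x. two_neuron \<rho> w0 e0 w1 e1 (a * (recentred \<rho> x0 ^^ (length Ns - 1)) (x $ coord - c)))
      = realize \<rho> Ns (coord_input coord a \<beta>, [readout w0 w1])"
  proof
    fix x :: "real^'d"
    show "two_neuron \<rho> w0 e0 w1 e1 (a * (recentred \<rho> x0 ^^ (length Ns - 1)) (x $ coord - c))
      = realize \<rho> Ns (coord_input coord a \<beta>, [readout w0 w1]) x"
      using Ns apply_layers_readout_two_neuron[of m w1 \<rho> w0 "a * (x $ coord - c)" e0 e1]
      by (simp add: m realize_coord_input \<beta>_def algebra_simps)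
  qed
  then show ?thesis by (simp add: realize_in_RNN m)
next
  case False
  then have "length Ns \<ge> 2" using Ns by (cases Ns) (auto simp: Suc_le_eq)
  then obtain ls where ls: "length ls = length Ns" and
    eq: "\<And>v. apply_layers \<rho> Ns ls v 0 =
      two_neuron \<rho> w0 e0 w1 e1 (a * (recentred \<rho> x0 ^^ (length Ns - 2)) (v 0 - \<rho> x0))"
    using hidden_layers_two_neuron Ns by blast
  have "length Ns - 1 = Suc (length Ns - 2)" using \<open>length Ns \<ge> 2\<close> by simp
  then have "(\<lambda>x. two_neuron \<rho> w0 e0 w1 e1 (a * (recentred \<rho> x0 ^^ (length Ns - 1)) (x $ coord - c)))
      = realize \<rho> Ns (coord_input coord 1 (\<lambda>i. x0 - c), ls)"
    by (simp add: fun_eq_iff realize_coord_input eq funpow_Suc_right recentred_def algebra_simps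
        del: funpow.simps)
  then show ?thesis by (simp add: realize_in_RNN[OF ls])
qed

lemma sgn_diff_of_mono_deriv_nonzero:
  fixes \<rho> :: "real \<Rightarrow> real"
  assumes mono: "mono \<rho>" and deriv: "(\<rho> has_real_derivative D) (at x0)" and "D \<noteq> 0"
  shows "sgn (\<rho> y - \<rho> x0) = sgn (y - x0)"
proof -
  have "D > 0"
  proof (rule ccontr)
    assume "\<not> D > 0"
    then obtain d where "d > 0" "\<And>h. h > 0 \<Longrightarrow> h < d \<Longrightarrow> \<rho> (x0 + h) < \<rho> x0"
      using DERIV_neg_dec_right[OF deriv] \<open>D \<noteq> 0\<close> by (metis linorder_neqE_linordered_idom)
    then have "\<rho> (x0 + d/2) < \<rho> x0" by simp
    moreover have "\<rho> x0 \<le> \<rho> (x0 + d/2)" using \<open>d > 0\<close> by (intro monoD[OF mono]) simp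
    ultimately show False by simp
  qed
  obtain d1 where d1: "d1 > 0" "\<And>h. h > 0 \<Longrightarrow> h < d1 \<Longrightarrow> \<rho> x0 < \<rho> (x0 + h)"
    using DERIV_pos_inc_right[OF deriv \<open>D > 0\<close>] by blast
  obtain d2 where d2: "d2 > 0" "\<And>h. h > 0 \<Longrightarrow> h < d2 \<Longrightarrow> \<rho> (x0 - h) < \<rho> x0"
    using DERIV_pos_inc_left[OF deriv \<open>D > 0\<close>] by blast
  consider "y < x0" | "y = x0" | "y > x0" by linarith
  then show ?thesis
  proof cases
    case 1
    define h where "h = min (d2/2) (x0 - y)"
    have "\<rho> y \<le> \<rho> (x0 - h)" by (intro monoD[OF mono]) (simp add: h_def)
    also have "\<dots> < \<rho> x0" using d2 1 by (intro d2(2)) (simp_all add: h_def)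
    finally show ?thesis using 1 by simp
  next
    case 3
    define h where "h = min (d1/2) (y - x0)"
    have "\<rho> x0 < \<rho> (x0 + h)" using d1 3 by (intro d1(2)) (simp_all add: h_def)
    also have "\<dots> \<le> \<rho> y" by (intro monoD[OF mono]) (simp add: h_def)
    finally show ?thesis using 3 by simp
  qed simp
qed

lemma sgn_recentred_funpow:
  assumes "\<And>y. sgn (\<rho> y - \<rho> x0) = sgn (y - x0)"
  shows "sgn ((recentred \<rho> x0 ^^ k) t) = sgn t"
proof (induction k)
  case (Suc k)
  have "sgn (recentred \<rho> x0 u) = sgn u" for u
    using assms[of "u + x0"] by (simp add: recentred_def)
  then show ?case using Suc by simp
qed simp

lemma mono_tendsto_Sup_at_top:
  fixes \<rho> :: "real \<Rightarrow> real"
  assumes mono: "mono \<rho>" and bdd: "bdd_above (range \<rho>)"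
  shows "(\<rho> \<longlongrightarrow> Sup (range \<rho>)) at_top"
proof (rule order_tendstoI)
  fix a assume "a < Sup (range \<rho>)"
  then obtain z where z: "a < \<rho> z" using less_cSup_iff[of "range \<rho>"] bdd by auto
  show "eventually (\<lambda>x. a < \<rho> x) at_top"
    by (rule eventually_mono[OF eventually_ge_at_top[of z]]) (metis z mono monoD less_le_trans)
next
  fix a assume "Sup (range \<rho>) < a"
  then show "eventually (\<lambda>x. \<rho> x < a) at_top"
    using cSup_upper[OF _ bdd] by (intro always_eventually allI) (metis le_less_trans rangeI)
qed

lemma mono_tendsto_Inf_at_bot:
  fixes \<rho> :: "real \<Rightarrow> real"
  assumes mono: "mono \<rho>" and bdd: "bdd_below (range \<rho>)"
  shows "(\<rho> \<longlongrightarrow> Inf (range \<rho>)) at_bot"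
proof (rule order_tendstoI)
  fix a assume "Inf (range \<rho>) < a"
  then obtain z where z: "\<rho> z < a" using cInf_less_iff[of "range \<rho>"] bdd by auto
  show "eventually (\<lambda>x. \<rho> x < a) at_bot"
    by (rule eventually_mono[OF eventually_le_at_bot[of z]]) (metis z mono monoD le_less_trans)
next
  fix a assume "a < Inf (range \<rho>)"
  then show "eventually (\<lambda>x. a < \<rho> x) at_bot"
    using cInf_lower[OF _ bdd] by (intro always_eventually allI) (metis less_le_trans rangeI)
qed

lemma unit_difference_tendsto_deriv_limit:
  fixes \<rho> :: "real \<Rightarrow> real"
  assumes diff: "\<forall>x. \<bar>x\<bar> > r \<longrightarrow> \<rho> differentiable (at x)"
    and lim: "(deriv \<rho> \<longlongrightarrow> l) F" and F: "F = at_top \<or> F = at_bot"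
  shows "((\<lambda>y. \<rho> (y + 1) - \<rho> y) \<longlongrightarrow> l) F"
proof -
  have "\<exists>\<xi>. y < \<xi> \<and> \<xi> < y + 1 \<and> \<rho> (y + 1) - \<rho> y = deriv \<rho> \<xi>" if "y > r \<or> y + 1 < - r" for y
  proof -
    have "\<And>x. y \<le> x \<Longrightarrow> x \<le> y + 1 \<Longrightarrow> DERIV \<rho> x :> deriv \<rho> x"
      using diff that by (subst DERIV_deriv_iff_real_differentiable) auto
    then show ?thesis using MVT2[of y "y + 1" \<rho> "deriv \<rho>"] by auto
  qed
  then obtain \<xi> where \<xi>: "\<And>y. y > r \<or> y + 1 < - r \<Longrightarrow>
      y < \<xi> y \<and> \<xi> y < y + 1 \<and> \<rho> (y + 1) - \<rho> y = deriv \<rho> (\<xi> y)"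
    by metis
  have ev: "eventually (\<lambda>y. y > r \<or> y + 1 < - r) F"
    using F
  proof
    assume "F = at_top"
    then show ?thesis by (simp add: eventually_mono[OF eventually_gt_at_top[of r]])
  next
    assume "F = at_bot"
    then show ?thesis by (simp add: eventually_mono[OF eventually_le_at_bot[of "- r - 2"]])
  qed
  have above: "eventually (\<lambda>y. y \<le> \<xi> y) F" and below: "eventually (\<lambda>y. \<xi> y \<le> y + 1) F"
    using ev by (auto elim!: eventually_mono dest!: \<xi>)
  have "filterlim \<xi> F F"
    using F
  proof
    assume "F = at_top"
    then show ?thesis using above by (auto intro: filterlim_at_top_mono[OF filterlim_ident])
  next
    assume "F = at_bot"
    have "filterlim (\<lambda>y::real. y + 1) at_bot at_bot" by real_asymp
    then show ?thesis using filterlim_at_bot_mono[of _ F \<xi>] below \<open>F = at_bot\<close> by simp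
  qed
  with lim have "((\<lambda>y. deriv \<rho> (\<xi> y)) \<longlongrightarrow> l) F" by (rule filterlim_compose)
  then show ?thesis
    by (rule tendsto_cong[THEN iffD1, rotated]) (use ev \<xi> in \<open>auto elim: eventually_mono\<close>)
qed

lemma bounded_range_of_tendsto_at_top_at_bot:
  fixes G :: "real \<Rightarrow> real"
  assumes "continuous_on UNIV G" "(G \<longlongrightarrow> a) at_top" "(G \<longlongrightarrow> b) at_bot"
  shows "bounded (range G)"
proof -
  obtain R1 where R1: "\<And>y. y \<ge> R1 \<Longrightarrow> dist (G y) a < 1"
    using tendstoD[OF assms(2), of 1] by (auto simp: eventually_at_top_linorder)
  obtain R2 where R2: "\<And>y. y \<le> R2 \<Longrightarrow> dist (G y) b < 1"
    using tendstoD[OF assms(3), of 1] by (auto simp: eventually_at_bot_linorder)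
  have "bounded (G ` {R2..R1})"
    by (intro compact_imp_bounded compact_continuous_image continuous_on_subset[OF assms(1)]) auto
  moreover have "bounded (ball a 1)" "bounded (ball b 1)" by simp_all
  ultimately have "bounded (G ` {R2..R1} \<union> ball a 1 \<union> ball b 1)" by simp
  moreover have "G y \<in> G ` {R2..R1} \<union> ball a 1 \<union> ball b 1" for y
    using R1[of y] R2[of y] by (cases "y \<ge> R1"; cases "y \<le> R2") (auto simp: dist_commute)
  then have "range G \<subseteq> G ` {R2..R1} \<union> ball a 1 \<union> ball b 1" by blast
  ultimately show ?thesis by (rule bounded_subset)
qed

lemma tendsto_scaled_by_sign:
  fixes G :: "real \<Rightarrow> real"
  assumes top: "(G \<longlongrightarrow> Lp) at_top" and bot: "(G \<longlongrightarrow> Lm) at_bot"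
  shows "(\<lambda>n. G (t * real n)) \<longlonglongrightarrow> (if t > 0 then Lp else if t < 0 then Lm else G 0)"
proof -
  consider "t > 0" | "t < 0" | "t = 0" by linarith
  then show ?thesis
  proof cases
    case 1
    then have "filterlim (\<lambda>n. t * real n) at_top sequentially"
      by (intro filterlim_tendsto_pos_mult_at_top[OF tendsto_const] filterlim_real_sequentially)
    from filterlim_compose[OF top this] show ?thesis using 1 by simp
  next
    case 2
    then have "filterlim (\<lambda>n. t * real n) at_bot sequentially"
      by (intro filterlim_tendsto_neg_mult_at_bot[OF tendsto_const] filterlim_real_sequentially)
    from filterlim_compose[OF bot this] show ?thesis using 2 by simp
  qed simp
qed

lemma countable_local_min_values:
  fixes f :: "'a::second_countable_topology \<Rightarrow> real"
  shows "countable (f ` {y\<in>S. \<exists>U. open U \<and> y \<in> U \<and> (\<forall>z\<in>S \<inter> U. f y \<le> f z)})"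
proof -
  obtain \<B> :: "'a set set" where "countable \<B>" and basis: "topological_basis \<B>"
    using ex_countable_basis by blast
  have "f ` {y\<in>S. \<exists>U. open U \<and> y \<in> U \<and> (\<forall>z\<in>S \<inter> U. f y \<le> f z)}
      \<subseteq> (\<lambda>b. Inf (f ` (S \<inter> b))) ` \<B>"
  proof clarify
    fix y U assume y: "y \<in> S" "open U" "y \<in> U" "\<forall>z\<in>S \<inter> U. f y \<le> f z"
    obtain b where b: "b \<in> \<B>" "y \<in> b" "b \<subseteq> U" using topological_basisE[OF basis y(2,3)] by blast
    have "Inf (f ` (S \<inter> b)) = f y"
      by (rule cInf_eq_minimum) (use y b in auto)
    then show "f y \<in> (\<lambda>b. Inf (f ` (S \<inter> b))) ` \<B>" using b by force
  qed
  then show ?thesis by (rule countable_subset) (simp add: \<open>countable \<B>\<close>)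
qed

lemma two_sided_point_of_uncountable_image:
  fixes f :: "'a::second_countable_topology \<Rightarrow> real"
  assumes "uncountable (f ` S)"
  obtains y where "y \<in> S"
    and "\<And>U. open U \<Longrightarrow> y \<in> U \<Longrightarrow> \<exists>z\<in>S \<inter> U. f z < f y"
    and "\<And>U. open U \<Longrightarrow> y \<in> U \<Longrightarrow> \<exists>z\<in>S \<inter> U. f y < f z"
proof -
  define local_min where "local_min = {y\<in>S. \<exists>U. open U \<and> y \<in> U \<and> (\<forall>z\<in>S \<inter> U. f y \<le> f z)}"
  define local_max where "local_max = {y\<in>S. \<exists>U. open U \<and> y \<in> U \<and> (\<forall>z\<in>S \<inter> U. - f y \<le> - f z)}"
  have "countable (f ` local_min)" unfolding local_min_def by (rule countable_local_min_values)
  moreover have "countable (uminus ` f ` local_max)"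
    using countable_local_min_values[of "\<lambda>x. - f x" S] by (simp add: local_max_def image_image)
  then have "countable (f ` local_max)" by (rule countable_image_inj_on[OF _ inj_uminus])
  ultimately have "countable (f ` local_min \<union> f ` local_max)" by simp
  then have "\<not> f ` S \<subseteq> f ` local_min \<union> f ` local_max"
    using assms countable_subset by auto
  then obtain y where "y \<in> S" "y \<notin> local_min" "y \<notin> local_max" by blast
  then show ?thesis by (intro that) (auto simp: local_min_def local_max_def not_le)
qed

lemma uncountable_imp_uncountable_component:
  fixes S :: "(real^'d::finite) set"
  assumes "uncountable S"
  obtains i where "uncountable ((\<lambda>x. x $ i) ` S)"
proof (rule ccontr)
  assume "\<not> thesis"
  with that have "countable ((\<lambda>x. x $ i) ` S)" for i by blast
  then have "countable (Pi\<^sub>E UNIV (\<lambda>i. (\<lambda>x. x $ i) ` S))" by (intro countable_PiE) auto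
  moreover have "vec_nth ` S \<subseteq> Pi\<^sub>E UNIV (\<lambda>i. (\<lambda>x. x $ i) ` S)"
    by (auto simp: PiE_UNIV_domain)
  ultimately have "countable (vec_nth ` S)" by (rule countable_subset[rotated])
  moreover have "inj_on vec_nth S" by (auto simp: inj_on_def vec_eq_iff)
  ultimately have "countable S" by (rule countable_image_inj_on)
  then show False using assms by simp
qed

lemma nn_integral_powr_bounded_finite:
  assumes "finite_measure \<mu>" "\<And>x. \<bar>f x\<bar> \<le> M" "p > 0"
  shows "(\<integral>\<^sup>+ x. ennreal (\<bar>f x\<bar> powr p) \<partial>\<mu>) < \<infinity>"
proof -
  have "(\<integral>\<^sup>+ x. ennreal (\<bar>f x\<bar> powr p) \<partial>\<mu>) \<le> (\<integral>\<^sup>+ x. ennreal (M powr p) \<partial>\<mu>)"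
    by (intro nn_integral_mono ennreal_leI powr_mono2) (use assms in auto)
  also have "\<dots> = ennreal (M powr p) * emeasure \<mu> (space \<mu>)" by simp
  also have "\<dots> < \<infinity>"
    using finite_measure.emeasure_finite[OF assms(1)]
    by (simp add: ennreal_mult_less_top top.not_eq_extremum)
  finally show ?thesis .
qed

lemma nn_integral_powr_tendsto_of_bounded_pointwise:
  assumes fin: "finite_measure \<mu>" and meas: "\<And>n. g n \<in> borel_measurable \<mu>" "f \<in> borel_measurable \<mu>"
    and bound: "\<And>n x. \<bar>g n x\<bar> \<le> M" "\<And>x. \<bar>f x\<bar> \<le> M"
    and lim: "\<And>x. (\<lambda>n. g n x) \<longlonglongrightarrow> f x" and p: "p > 0"
  shows "(\<lambda>n. \<integral>\<^sup>+ x. ennreal (\<bar>g n x - f x\<bar> powr p) \<partial>\<mu>) \<longlonglongrightarrow> 0"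
proof -
  have "(\<lambda>n. \<integral>\<^sup>+ x. ennreal (\<bar>g n x - f x\<bar> powr p) \<partial>\<mu>) \<longlonglongrightarrow> (\<integral>\<^sup>+ x. 0 \<partial>\<mu>)"
  proof (rule nn_integral_dominated_convergence[where w = "\<lambda>x. ennreal ((2 * M) powr p)"])
    show "\<And>n. (\<lambda>x. ennreal (\<bar>g n x - f x\<bar> powr p)) \<in> borel_measurable \<mu>"
      using meas by measurable
    show "AE x in \<mu>. ennreal (\<bar>g n x - f x\<bar> powr p) \<le> ennreal ((2 * M) powr p)" for n
    proof (intro AE_I2 ennreal_leI powr_mono2)
      show "\<bar>g n x - f x\<bar> \<le> 2 * M" for x using bound(1)[of n x] bound(2)[of x] by linarith
    qed (use p in auto)
    show "(\<integral>\<^sup>+ x. ennreal ((2 * M) powr p) \<partial>\<mu>) < \<infinity>"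
      using finite_measure.emeasure_finite[OF fin]
      by (simp add: ennreal_mult_less_top top.not_eq_extremum)
    show "AE x in \<mu>. (\<lambda>n. ennreal (\<bar>g n x - f x\<bar> powr p)) \<longlonglongrightarrow> 0"
    proof (rule AE_I2)
      fix x
      have "(\<lambda>n. \<bar>g n x - f x\<bar>) \<longlonglongrightarrow> 0"
        using tendsto_rabs_zero[OF LIM_zero[OF lim]] .
      then have "(\<lambda>n. \<bar>g n x - f x\<bar> powr p) \<longlonglongrightarrow> 0"
        by (intro tendsto_zero_powrI[OF _ tendsto_const]) (use p in auto)
      then show "(\<lambda>n. ennreal (\<bar>g n x - f x\<bar> powr p)) \<longlonglongrightarrow> 0"
        using tendsto_ennrealI by fastforce
    qed
  qed auto
  then show ?thesis by simp
qed

lemma continuous_AE_eq_const_near_imp_eq: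
  fixes h :: "'a::topological_space \<Rightarrow> 'b::metric_space"
  assumes cont: "continuous_on UNIV h" and sets: "sets \<mu> = sets borel"
    and "open V" and AE: "AE x in \<mu>. x \<in> V \<longrightarrow> h x = L"
    and pos: "\<And>U. open U \<Longrightarrow> y \<in> U \<Longrightarrow> emeasure \<mu> (U \<inter> V) > 0"
  shows "h y = L"
proof (rule ccontr)
  assume "h y \<noteq> L"
  define U where "U = h -` ball (h y) (dist (h y) L)"
  have "open U" "y \<in> U" using cont \<open>h y \<noteq> L\<close> by (simp_all add: U_def open_vimage)
  have "AE x in \<mu>. x \<notin> U \<inter> V"
    using AE by eventually_elim (auto simp: U_def dist_commute)
  moreover have "U \<inter> V \<in> sets \<mu>" using \<open>open U\<close> \<open>open V\<close> sets by auto
  ultimately have "emeasure \<mu> (U \<inter> V) = 0"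
    using AE_iff_measurable[of "U \<inter> V" \<mu> "\<lambda>x. x \<notin> U \<inter> V"] sets.sets_into_space by blast
  then show False using pos[OF \<open>open U\<close> \<open>y \<in> U\<close>] by simp
qed

lemma continuous_AE_eq_step_imp_eq:
  fixes \<mu> :: "(real^'d::finite) measure" and h :: "real^'d \<Rightarrow> 'b::metric_space"
  assumes cont: "continuous_on UNIV h" and sets: "sets \<mu> = sets borel"
    and left: "\<And>U. open U \<Longrightarrow> y \<in> U \<Longrightarrow> \<exists>z\<in>support \<mu> \<inter> U. z $ i < y $ i"
    and right: "\<And>U. open U \<Longrightarrow> y \<in> U \<Longrightarrow> \<exists>z\<in>support \<mu> \<inter> U. y $ i < z $ i"
    and AE: "AE x in \<mu>. h x = (if x $ i > y $ i then Lp else if x $ i < y $ i then Lm else L0)"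
  shows "Lp = Lm"
proof -
  have positive: "emeasure \<mu> (U \<inter> V) > 0" if "open U" "open V" "z \<in> support \<mu> \<inter> U \<inter> V" for U V z
    using that by (auto simp: support_def)
  have "open {x::real^'d. x $ i < y $ i}" and "open {x::real^'d. y $ i < x $ i}"
    by (auto intro!: open_Collect_less continuous_intros)
  have "h y = Lm"
  proof (rule continuous_AE_eq_const_near_imp_eq[OF cont sets \<open>open {x. x $ i < y $ i}\<close>])
    show "AE x in \<mu>. x \<in> {x. x $ i < y $ i} \<longrightarrow> h x = Lm" using AE by (auto elim: eventually_mono)
    show "emeasure \<mu> (U \<inter> {x. x $ i < y $ i}) > 0" if "open U" "y \<in> U" for U
      using left[OF that] positive[OF \<open>open U\<close> \<open>open {x. x $ i < y $ i}\<close>] by blast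
  qed
  moreover have "h y = Lp"
  proof (rule continuous_AE_eq_const_near_imp_eq[OF cont sets \<open>open {x. y $ i < x $ i}\<close>])
    show "AE x in \<mu>. x \<in> {x. y $ i < x $ i} \<longrightarrow> h x = Lp" using AE by (auto elim: eventually_mono)
    show "emeasure \<mu> (U \<inter> {x. y $ i < x $ i}) > 0" if "open U" "y \<in> U" for U
      using right[OF that] positive[OF \<open>open U\<close> \<open>open {x. y $ i < x $ i}\<close>] by blast
  qed
  ultimately show ?thesis by simp
qed

lemma step_function_Lp_limit_of_RNN:
  fixes \<mu> :: "(real^'d::finite) measure" and i :: 'd and c :: real
  assumes cont: "continuous_on UNIV \<rho>" and sgn: "\<And>y. sgn (\<rho> y - \<rho> x0) = sgn (y - x0)"
    and top: "(two_neuron \<rho> w0 e0 w1 e1 \<longlongrightarrow> Lp) at_top"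
    and bot: "(two_neuron \<rho> w0 e0 w1 e1 \<longlongrightarrow> Lm) at_bot"
    and sets: "sets \<mu> = sets borel" and fin: "finite_measure \<mu>"
    and Ns: "Ns \<noteq> []" "\<forall>m\<in>set Ns. m \<ge> 1" "last Ns \<ge> 2 \<or> w1 = 0" and p: "p > 0"
  defines "f \<equiv> \<lambda>x. if x $ i > c then Lp else if x $ i < c then Lm else two_neuron \<rho> w0 e0 w1 e1 0"
  obtains g where "\<And>n. g n \<in> RNN \<rho> Ns" and "f \<in> borel_measurable \<mu>"
    and "(\<integral>\<^sup>+ x. ennreal (\<bar>f x\<bar> powr p) \<partial>\<mu>) < \<infinity>"
    and "(\<lambda>n. \<integral>\<^sup>+ x. ennreal (\<bar>g n x - f x\<bar> powr p) \<partial>\<mu>) \<longlonglongrightarrow> 0"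
proof -
  define G where "G = two_neuron \<rho> w0 e0 w1 e1"
  define T where "T x = (recentred \<rho> x0 ^^ (length Ns - 1)) (x $ i - c)" for x
  define g where "g = (\<lambda>n x. G (T x * real n))"
  have g_RNN: "g n \<in> RNN \<rho> Ns" for n
    using two_neuron_recentred_in_RNN[OF Ns, where a = "real n" and coord = i and c = c]
    by (simp add: g_def G_def T_def mult.commute)
  have g_f: "(\<lambda>n. g n x) \<longlonglongrightarrow> f x" for x
  proof -
    have "sgn (T x) = sgn (x $ i - c)" by (simp add: T_def sgn_recentred_funpow[OF sgn])
    then have "T x > 0 \<longleftrightarrow> x $ i > c" "T x < 0 \<longleftrightarrow> x $ i < c"
      by (metis diff_gt_0_iff_gt sgn_greater, metis diff_less_0_iff_less sgn_less)
    then have "f x = (if T x > 0 then Lp else if T x < 0 then Lm else G 0)"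
      by (simp add: f_def G_def)
    then show ?thesis
      using tendsto_scaled_by_sign[OF top[folded G_def] bot[folded G_def], of "T x"]
      by (simp add: g_def)
  qed
  have "continuous_on UNIV G"
    unfolding G_def two_neuron_def[abs_def]
    by (intro continuous_intros continuous_on_compose2[OF cont]) auto
  then obtain M where "\<And>t. \<bar>G t\<bar> \<le> M"
    using bounded_range_of_tendsto_at_top_at_bot[of G] top bot
    unfolding G_def bounded_iff by fastforce
  then have g_bound: "\<bar>g n x\<bar> \<le> M" for n x by (simp add: g_def)
  have f_bound: "\<bar>f x\<bar> \<le> M" for x
    by (rule LIMSEQ_le_const2[OF tendsto_rabs[OF g_f]]) (use g_bound in auto)
  have g_meas: "g n \<in> borel_measurable \<mu>" for n
    using borel_measurable_continuous_onI[OF RNN_continuous[OF cont g_RNN]]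
    by (simp add: measurable_cong_sets[OF sets refl])
  have f_meas: "f \<in> borel_measurable \<mu>"
    unfolding f_def measurable_cong_sets[OF sets refl] by measurable
  show thesis
    by (rule that[OF g_RNN f_meas nn_integral_powr_bounded_finite[OF fin f_bound p]
          nn_integral_powr_tendsto_of_bounded_pointwise[OF fin g_meas f_meas g_bound f_bound g_f p]])
qed

lemma not_Lp_closed_RNN_of_two_neuron_limits:
  fixes \<mu> :: "(real^'d::finite) measure"
  assumes cont: "continuous_on UNIV \<rho>" and sgn: "\<And>y. sgn (\<rho> y - \<rho> x0) = sgn (y - x0)"
    and top: "(two_neuron \<rho> w0 e0 w1 e1 \<longlongrightarrow> Lp) at_top"
    and bot: "(two_neuron \<rho> w0 e0 w1 e1 \<longlongrightarrow> Lm) at_bot" and "Lp \<noteq> Lm"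
    and sets: "sets \<mu> = sets borel" and fin: "finite_measure \<mu>"
    and unc: "uncountable (support \<mu>)"
    and Ns: "Ns \<noteq> []" "\<forall>m\<in>set Ns. m \<ge> 1" "last Ns \<ge> 2 \<or> w1 = 0" and p: "p > 0"
  shows "\<not> Lp_closed \<mu> p (RNN \<rho> Ns)"
proof
  assume closed: "Lp_closed \<mu> p (RNN \<rho> Ns)"
  obtain i where "uncountable ((\<lambda>x. x $ i) ` support \<mu>)"
    using uncountable_imp_uncountable_component[OF unc] .
  then obtain y
    where left: "\<And>U. open U \<Longrightarrow> y \<in> U \<Longrightarrow> \<exists>z\<in>support \<mu> \<inter> U. z $ i < y $ i"
      and right: "\<And>U. open U \<Longrightarrow> y \<in> U \<Longrightarrow> \<exists>z\<in>support \<mu> \<inter> U. y $ i < z $ i"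
    by (rule two_sided_point_of_uncountable_image) blast
  define f where
    "f = (\<lambda>x. if x $ i > y $ i then Lp else if x $ i < y $ i then Lm else two_neuron \<rho> w0 e0 w1 e1 0)"
  obtain g where "\<And>n. g n \<in> RNN \<rho> Ns" and "f \<in> borel_measurable \<mu>"
    and "(\<integral>\<^sup>+ x. ennreal (\<bar>f x\<bar> powr p) \<partial>\<mu>) < \<infinity>"
    and "(\<lambda>n. \<integral>\<^sup>+ x. ennreal (\<bar>g n x - f x\<bar> powr p) \<partial>\<mu>) \<longlonglongrightarrow> 0"
    unfolding f_def
    by (rule step_function_Lp_limit_of_RNN[OF cont sgn top bot sets fin Ns p, where i = i and c = "y $ i"])
      blast
  then obtain h where h: "h \<in> RNN \<rho> Ns" and h_f: "AE x in \<mu>. h x = f x"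
    using closed[unfolded Lp_closed_def, rule_format] by blast
  have "Lp = Lm"
    by (rule continuous_AE_eq_step_imp_eq[OF RNN_continuous[OF cont h] sets left right
          h_f[unfolded f_def]])
  with \<open>Lp \<noteq> Lm\<close> show False ..
qed

lemma admissible_not_Lp_closed_RNN:
  fixes \<mu> :: "(real^'d::finite) measure"
  assumes adm: "admissible_activation \<rho>"
    and sets: "sets \<mu> = sets borel" and fin: "finite_measure \<mu>"
    and unc: "uncountable (support \<mu>)"
    and Ns: "Ns \<noteq> []" "\<forall>m\<in>set Ns. m \<ge> 1" "last Ns \<ge> (if bounded (range \<rho>) then 1 else 2)"
    and p: "p > 0"
  shows "\<not> Lp_closed \<mu> p (RNN \<rho> Ns)"
proof -
  have cont: "continuous_on UNIV \<rho>" and mono: "mono \<rho>"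
    using adm by (auto simp: admissible_activation_def)
  obtain x0 D where "(\<rho> has_real_derivative D) (at x0)" "D \<noteq> 0"
    using adm by (auto simp: admissible_activation_def)
  then have sgn: "\<And>y. sgn (\<rho> y - \<rho> x0) = sgn (y - x0)"
    using sgn_diff_of_mono_deriv_nonzero[OF mono] by blast
  note two_neuron_limits =
    not_Lp_closed_RNN_of_two_neuron_limits[OF cont sgn _ _ _ sets fin unc Ns(1,2) _ p]
  show ?thesis
  proof (cases "bounded (range \<rho>)")
    case True
    then have above: "bdd_above (range \<rho>)" and below: "bdd_below (range \<rho>)"
      by (auto simp: bounded_imp_bdd_above bounded_imp_bdd_below)
    have "sgn (\<rho> (x0 - 1) - \<rho> x0) < 0" "sgn (\<rho> (x0 + 1) - \<rho> x0) > 0"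
      using sgn[of "x0 - 1"] sgn[of "x0 + 1"] by simp_all
    then have "Inf (range \<rho>) < Sup (range \<rho>)"
      using cInf_lower[OF _ below, of "\<rho> (x0 - 1)"] cSup_upper[OF _ above, of "\<rho> (x0 + 1)"] by simp
    moreover have "two_neuron \<rho> 1 0 0 0 = \<rho>" by (simp add: fun_eq_iff two_neuron_def)
    ultimately show ?thesis
      using two_neuron_limits[of 1 0 0 0 "Sup (range \<rho>)" "Inf (range \<rho>)"]
        mono_tendsto_Sup_at_top[OF mono above]
        mono_tendsto_Inf_at_bot[OF mono below] by simp
  next
    case False
    then obtain l1 l2 where "l1 \<noteq> l2" and l1: "(deriv \<rho> \<longlongrightarrow> l1) at_top"
      and l2: "(deriv \<rho> \<longlongrightarrow> l2) at_bot"
      using adm by (auto simp: admissible_activation_def)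
    obtain r where diff: "\<forall>x. \<bar>x\<bar> > r \<longrightarrow> \<rho> differentiable (at x)"
      using adm by (auto simp: admissible_activation_def)
    have "two_neuron \<rho> 1 1 (-1) 0 = (\<lambda>y. \<rho> (y + 1) - \<rho> y)"
      by (simp add: fun_eq_iff two_neuron_def)
    then show ?thesis
      using two_neuron_limits[of 1 1 "-1" 0 l1 l2] \<open>l1 \<noteq> l2\<close> Ns(3) False
        unit_difference_tendsto_deriv_limit[OF diff l1]
        unit_difference_tendsto_deriv_limit[OF diff l2]
      by simp
  qed
qed

lemma admissible_activationI_deriv_limits:
  fixes \<rho> :: "real \<Rightarrow> real"
  assumes "continuous_on UNIV \<rho>" "mono \<rho>" "(\<rho> has_real_derivative D) (at z)" "D \<noteq> 0"
    and r: "r > 0"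
    and dp: "\<And>x. x > r \<Longrightarrow> (\<rho> has_real_derivative dp x) (at x)"
    and dm: "\<And>x. x < - r \<Longrightarrow> (\<rho> has_real_derivative dm x) (at x)"
    and lp: "(dp \<longlongrightarrow> la) at_top" and lm: "(dm \<longlongrightarrow> lb) at_bot"
    and l: "la \<ge> 0" "lb \<ge> 0" "la \<noteq> lb"
  shows "admissible_activation \<rho>"
  unfolding admissible_activation_def
proof (intro conjI)
  show "\<exists>r>0. \<forall>x. r < \<bar>x\<bar> \<longrightarrow> \<rho> differentiable at x"
  proof (intro exI[of _ r] conjI allI impI)
    fix x :: real assume "r < \<bar>x\<bar>"
    then have "x > r \<or> x < - r" by linarith
    then show "\<rho> differentiable at x"
      using dp dm unfolding real_differentiable_def by blast
  qed (use r in auto)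
  have "((deriv \<rho>) \<longlongrightarrow> la) at_top"
  proof -
    have "eventually (\<lambda>x. dp x = deriv \<rho> x) at_top"
      using eventually_gt_at_top[of r] by eventually_elim (metis dp DERIV_imp_deriv)
    then show ?thesis using lp tendsto_cong by blast
  qed
  moreover have "((deriv \<rho>) \<longlongrightarrow> lb) at_bot"
  proof -
    have "eventually (\<lambda>x. dm x = deriv \<rho> x) at_bot"
      using eventually_gt_at_bot[of "-r"] by eventually_elim (metis dm DERIV_imp_deriv)
    then show ?thesis using lm tendsto_cong by blast
  qed
  ultimately show "bounded (range \<rho>) \<or> (\<exists>la lb. 0 \<le> la \<and> 0 \<le> lb \<and> la \<noteq> lb \<and>
      (deriv \<rho> \<longlongrightarrow> la) at_top \<and> (deriv \<rho> \<longlongrightarrow> lb) at_bot)"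
    using l by blast
qed (use assms in auto)

lemma admissible_activationI_bounded:
  fixes \<rho> :: "real \<Rightarrow> real"
  assumes "continuous_on UNIV \<rho>" "mono \<rho>" "(\<rho> has_real_derivative D) (at z)" "D \<noteq> 0"
    and "r > 0" "\<And>x. \<bar>x\<bar> > r \<Longrightarrow> \<rho> differentiable (at x)"
    and "\<And>x. \<bar>\<rho> x\<bar> \<le> M"
  shows "admissible_activation \<rho>"
  unfolding admissible_activation_def
proof (intro conjI disjI1)
  show "bounded (range \<rho>)" unfolding bounded_iff using assms(7) by auto
qed (use assms in auto)

lemma admissible_relu: "admissible_activation relu"
proof (rule admissible_activationI_deriv_limits[where D = 1 and z = 1 and r = 1
      and dp = "\<lambda>_. 1" and dm = "\<lambda>_. 0"])
  show "continuous_on UNIV relu" unfolding relu_def by (intro continuous_intros)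
  show "mono relu" unfolding relu_def by (intro monoI) auto
  have p: "(relu has_real_derivative 1) (at x)" if "x > 0" for x
    by (rule has_field_derivative_transform_within_open[of "\<lambda>x. x" _ _ "{0<..}"])
      (use that in \<open>auto simp: relu_def intro!: derivative_eq_intros\<close>)
  show "(relu has_real_derivative 1) (at 1)" by (rule p) simp
  show "\<And>x. x > 1 \<Longrightarrow> (relu has_real_derivative 1) (at x)" by (rule p) simp
  show "\<And>x. x < - 1 \<Longrightarrow> (relu has_real_derivative 0) (at x)"
    by (rule has_field_derivative_transform_within_open[of "\<lambda>x. 0" _ _ "{..<0}"])
      (auto simp: relu_def intro!: derivative_eq_intros)
qed auto

lemma admissible_prelu:
  assumes a: "a \<ge> 0" "a \<noteq> 1"
  shows "admissible_activation (prelu a)"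
proof (rule admissible_activationI_deriv_limits[where D = "max a 1" and z = 1 and r = 1
      and dp = "\<lambda>_. max a 1" and dm = "\<lambda>_. min a 1"
      and la = "max a 1" and lb = "min a 1"])
  show "continuous_on UNIV (prelu a)" unfolding prelu_def by (intro continuous_intros)
  show "mono (prelu a)" unfolding prelu_def
  proof (intro monoI)
    fix x y :: real assume "x \<le> y"
    then have "a * x \<le> a * y" using a by (simp add: mult_left_mono)
    then show "max (a * x) x \<le> max (a * y) y" using \<open>x \<le> y\<close> by linarith
  qed
  have pos: "prelu a y = max a 1 * y" if "y > 0" for y
    using that a by (cases "a \<le> 1") (auto simp: prelu_def max_def mult_right_mono)
  have neg: "prelu a y = min a 1 * y" if "y < 0" for y
    using that a by (cases "a \<le> 1") (auto simp: prelu_def max_def min_def mult_right_mono_neg)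
  have p: "(prelu a has_real_derivative max a 1) (at x)" if "x > 0" for x
    by (rule has_field_derivative_transform_within_open[of "\<lambda>x. max a 1 * x" _ _ "{0<..}"])
      (use that pos in \<open>auto intro!: derivative_eq_intros\<close>)
  show "(prelu a has_real_derivative max a 1) (at 1)" by (rule p) simp
  show "\<And>x. x > 1 \<Longrightarrow> (prelu a has_real_derivative max a 1) (at x)" by (rule p) simp
  show "\<And>x. x < - 1 \<Longrightarrow> (prelu a has_real_derivative min a 1) (at x)"
    by (rule has_field_derivative_transform_within_open[of "\<lambda>x. min a 1 * x" _ _ "{..<0}"])
      (use neg in \<open>auto intro!: derivative_eq_intros\<close>)
qed (use a in \<open>auto simp: max_def min_def\<close>)

lemma elu_eq_max_min: "elu x = max x 0 + exp (min x 0) - 1"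
  by (simp add: elu_def max_def min_def)

lemma admissible_elu: "admissible_activation elu"
proof (rule admissible_activationI_deriv_limits[where D = 1 and z = 1 and r = 1
      and dp = "\<lambda>_. 1" and dm = exp])
  show "continuous_on UNIV elu" unfolding elu_eq_max_min[abs_def] by (intro continuous_intros)
  show "mono elu" unfolding elu_eq_max_min[abs_def]
  proof (intro monoI)
    fix x y :: real assume "x \<le> y"
    then have "exp (min x 0) \<le> exp (min y 0)" by simp
    then show "max x 0 + exp (min x 0) - 1 \<le> max y 0 + exp (min y 0) - 1" using \<open>x \<le> y\<close> by linarith
  qed
  have p: "(elu has_real_derivative 1) (at x)" if "x > 0" for x
    by (rule has_field_derivative_transform_within_open[of "\<lambda>x. x" _ _ "{0<..}"])
      (use that in \<open>auto simp: elu_def intro!: derivative_eq_intros\<close>)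
  show "(elu has_real_derivative 1) (at 1)" by (rule p) simp
  show "\<And>x. x > 1 \<Longrightarrow> (elu has_real_derivative 1) (at x)" by (rule p) simp
  show "\<And>x. x < - 1 \<Longrightarrow> (elu has_real_derivative exp x) (at x)"
    by (rule has_field_derivative_transform_within_open[of "\<lambda>x. exp x - 1" _ _ "{..<0}"])
      (auto simp: elu_def intro!: derivative_eq_intros)
  show "((exp :: real \<Rightarrow> real) \<longlongrightarrow> 0) at_bot" by (rule exp_at_bot)
qed auto

lemma admissible_softsign: "admissible_activation softsign"
proof (rule admissible_activationI_bounded[where D = "1/4" and z = 1 and M = 1 and r = 1])
  show "continuous_on UNIV softsign" unfolding softsign_def[abs_def]
    by (intro continuous_intros) (auto simp: add_pos_nonneg)
  show "mono softsign" unfolding softsign_def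
  proof (intro monoI)
    fix x y :: real assume xy: "x \<le> y"
    have px: "0 < 1 + \<bar>x\<bar>" and py: "0 < 1 + \<bar>y\<bar>" by auto
    have "x * \<bar>y\<bar> \<le> y * \<bar>x\<bar>"
      using xy by (cases "0 \<le> x"; cases "0 \<le> y") (auto simp: mult_le_0_iff)
    then have "x * (1 + \<bar>y\<bar>) \<le> y * (1 + \<bar>x\<bar>)" using xy by (simp add: algebra_simps)
    then show "x / (1 + \<bar>x\<bar>) \<le> y / (1 + \<bar>y\<bar>)" using px py by (simp add: field_simps)
  qed
  have dpos: "((\<lambda>x. x / (1 + x)) has_real_derivative 1 / (1 + x)^2) (at x)" if "x > 0" for x :: real
    using that by (auto intro!: derivative_eq_intros simp: field_simps power2_eq_square)
  have pos: "(softsign has_real_derivative 1 / (1 + x)^2) (at x)" if "x > 0" for x :: real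
    by (rule has_field_derivative_transform_within_open[OF dpos[OF that], of "{0<..}"])
      (use that in \<open>auto simp: softsign_def\<close>)
  show "(softsign has_real_derivative 1 / 4) (at 1)" using pos[of 1] by simp
  show "\<And>x. \<bar>x\<bar> > 1 \<Longrightarrow> softsign differentiable (at x)"
  proof -
    fix x :: real assume "\<bar>x\<bar> > 1"
    then consider "x > 0" | "x < 0" by linarith
    then show "softsign differentiable (at x)"
    proof cases
      case 1 then show ?thesis using pos real_differentiable_def by blast
    next
      case 2
      have "((\<lambda>x. x / (1 - x)) has_real_derivative 1 / (1 - x)^2) (at x)"
        using 2 by (auto intro!: derivative_eq_intros simp: field_simps power2_eq_square)
      then have "(softsign has_real_derivative 1 / (1 - x)^2) (at x)"
        by (rule has_field_derivative_transform_within_open[of _ _ _ "{..<0}"])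
          (use 2 in \<open>auto simp: softsign_def\<close>)
      then show ?thesis using real_differentiable_def by blast
    qed
  qed
  show "\<And>x. \<bar>softsign x\<bar> \<le> 1" by (simp add: softsign_def abs_divide)
qed simp_all

lemma one_plus_exp_neq_0 [simp]: "1 + exp (x::real) \<noteq> 0"
  using exp_gt_zero[of x] by linarith

lemma sigmoid_has_real_derivative:
  "(sigmoid has_real_derivative exp (- x) / (1 + exp (- x))^2) (at x)"
  unfolding sigmoid_def[abs_def]
  by (auto intro!: derivative_eq_intros simp: field_simps power2_eq_square add_pos_pos)

lemma admissible_sigmoid: "admissible_activation sigmoid"
proof (rule admissible_activationI_bounded[where D = "1/4" and z = 0 and M = 1 and r = 1])
  show "continuous_on UNIV sigmoid" unfolding sigmoid_def[abs_def]
    by (intro continuous_intros) (auto simp: add_pos_pos)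
  show "mono sigmoid" unfolding sigmoid_def
  proof (intro monoI)
    fix x y :: real assume xy: "x \<le> y"
    then have "exp (- y) \<le> exp (- x)" by simp
    then show "1 / (1 + exp (- x)) \<le> 1 / (1 + exp (- y))"
      by (intro divide_left_mono) (auto simp: add_pos_pos)
  qed
  show "(sigmoid has_real_derivative 1/4) (at 0)" using sigmoid_has_real_derivative[of 0] by simp
  show "\<And>x. \<bar>x\<bar> > 1 \<Longrightarrow> sigmoid differentiable (at x)"
    using sigmoid_has_real_derivative real_differentiable_def by blast
  show "\<And>x. \<bar>sigmoid x\<bar> \<le> 1"
    by (simp add: sigmoid_def abs_divide add_pos_pos)
qed simp_all

lemma tanh_real_has_real_derivative:
  "((tanh :: real \<Rightarrow> real) has_real_derivative 1 - tanh x ^ 2) (at x)"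
  by (auto intro!: derivative_eq_intros)

lemma admissible_tanh: "admissible_activation tanh"
proof (rule admissible_activationI_bounded[where D = 1 and z = 0 and M = 1 and r = 1])
  show "continuous_on UNIV (tanh :: real \<Rightarrow> real)" by (intro continuous_intros) auto
  show "mono (tanh :: real \<Rightarrow> real)" by (intro monoI) simp
  show "(tanh has_real_derivative 1) (at 0)" using tanh_real_has_real_derivative[of 0] by simp
  show "\<And>x. \<bar>x\<bar> > 1 \<Longrightarrow> (tanh :: real \<Rightarrow> real) differentiable (at x)"
    using tanh_real_has_real_derivative real_differentiable_def by blast
  show "\<And>x::real. \<bar>tanh x\<bar> \<le> 1"
    using tanh_real_lt_1 tanh_real_gt_neg1 by (simp add: abs_le_iff less_imp_le)
qed simp_all

lemma admissible_arctan: "admissible_activation arctan"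
proof (rule admissible_activationI_bounded[where D = 1 and z = 0 and M = "pi/2" and r = 1])
  show "continuous_on UNIV arctan" by (intro continuous_intros)
  show "mono arctan" by (intro monoI) (simp add: arctan_le_iff)
  show "(arctan has_real_derivative 1) (at 0)" using DERIV_arctan[of 0] by simp
  show "\<And>x. \<bar>x\<bar> > 1 \<Longrightarrow> arctan differentiable (at x)"
    using DERIV_arctan real_differentiable_def by blast
  show "\<bar>arctan x\<bar> \<le> pi/2" for x
    unfolding abs_le_iff using arctan_bounded[of x] by linarith
qed simp_all

lemma softplus_has_real_derivative: "(softplus has_real_derivative exp x / (1 + exp x)) (at x)"
  unfolding softplus_def[abs_def]
  by (auto intro!: derivative_eq_intros simp: add_pos_pos)

lemma admissible_softplus: "admissible_activation softplus"
proof (rule admissible_activationI_deriv_limits[where D = "1/2" and z = 0 and r = 1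
      and dp = "\<lambda>x. exp x / (1 + exp x)"
      and dm = "\<lambda>x. exp x / (1 + exp x)" and la = 1 and lb = 0])
  show "continuous_on UNIV softplus" unfolding softplus_def[abs_def]
    by (intro continuous_intros) (auto simp: add_pos_pos)
  show "mono softplus" unfolding softplus_def
    by (intro monoI) (simp add: add_pos_pos)
  show "(softplus has_real_derivative 1/2) (at 0)" using softplus_has_real_derivative[of 0] by simp
  show "((\<lambda>x. exp x / (1 + exp x)) \<longlongrightarrow> (1::real)) at_top" by real_asymp
  show "((\<lambda>x. exp x / (1 + exp x)) \<longlongrightarrow> (0::real)) at_bot" by real_asymp
qed (auto intro: softplus_has_real_derivative)

text \<open>Through \<open>sin \<circ> arctan\<close>, continuity, monotonicity and boundedness of \<open>isru\<close> are inherited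
  from standard facts.\<close>
lemma isru_eq_sin_arctan:
  assumes a: "a > 0"
  shows "isru a x = (1 / sqrt a) * sin (arctan (sqrt a * x))"
proof -
  have "(sqrt a * x)^2 = a * x^2" using a by (simp add: power_mult_distrib)
  then show ?thesis using a by (simp add: isru_def sin_arctan)
qed

definition isru_derivative :: "real \<Rightarrow> real \<Rightarrow> real" where
  "isru_derivative a x = cos (arctan (sqrt a * x)) * inverse (1 + (sqrt a * x)^2)"

lemma isru_has_real_derivative:
  assumes a: "a > 0"
  shows "(isru a has_real_derivative isru_derivative a x) (at x)"
proof -
  have "((\<lambda>x. (1 / sqrt a) * sin (arctan (sqrt a * x))) has_real_derivative isru_derivative a x) (at x)"
    using a by (auto intro!: derivative_eq_intros simp: isru_derivative_def mult.assoc)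
  moreover have "(\<lambda>x. (1 / sqrt a) * sin (arctan (sqrt a * x))) = isru a"
    using isru_eq_sin_arctan[OF a] by auto
  ultimately show ?thesis by simp
qed

lemma continuous_on_isru: "a > 0 \<Longrightarrow> continuous_on UNIV (isru a)"
  using isru_eq_sin_arctan[of a] by (simp add: fun_eq_iff[symmetric]) (intro continuous_intros, simp)

lemma mono_isru:
  assumes a: "a > 0"
  shows "mono (isru a)"
proof (intro monoI)
  fix x y :: real assume xy: "x \<le> y"
  have "sqrt a * x \<le> sqrt a * y" using xy a by (simp add: mult_left_mono)
  then have "arctan (sqrt a * x) \<le> arctan (sqrt a * y)" by (simp add: arctan_le_iff)
  then have "sin (arctan (sqrt a * x)) \<le> sin (arctan (sqrt a * y))"
    using arctan_bounded[of "sqrt a * x"] arctan_bounded[of "sqrt a * y"]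
    by (intro sin_monotone_2pi_le) auto
  then show "isru a x \<le> isru a y" using a by (simp add: isru_eq_sin_arctan divide_right_mono)
qed

lemma admissible_isru:
  assumes a: "a > 0"
  shows "admissible_activation (isru a)"
proof (rule admissible_activationI_bounded[where D = 1 and z = 0 and M = "1 / sqrt a" and r = 1])
  show "continuous_on UNIV (isru a)" by (rule continuous_on_isru[OF a])
  show "mono (isru a)" by (rule mono_isru[OF a])
  show "(isru a has_real_derivative 1) (at 0)"
    using isru_has_real_derivative[OF a, of 0] by (simp add: isru_derivative_def)
  show "\<And>x. \<bar>x\<bar> > 1 \<Longrightarrow> isru a differentiable (at x)"
    using isru_has_real_derivative[OF a] real_differentiable_def by blast
  show "\<bar>isru a x\<bar> \<le> 1 / sqrt a" for x
    using a abs_sin_le_one[of "arctan (sqrt a * x)"]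
    by (simp add: isru_eq_sin_arctan abs_mult divide_right_mono)
qed simp_all

lemma isrlu_eq_max_min: "isrlu a x = max x 0 + isru a (min x 0)"
  by (simp add: isrlu_def isru_def max_def min_def)

lemma isru_derivative_tendsto_at_bot:
  assumes a: "a > 0"
  shows "(isru_derivative a \<longlongrightarrow> 0) at_bot"
proof -
  have e: "isru_derivative a = (\<lambda>x. 1 / sqrt (1 + (sqrt a * x)^2) * inverse (1 + (sqrt a * x)^2))"
    by (simp add: isru_derivative_def cos_arctan fun_eq_iff)
  show ?thesis unfolding e using a by real_asymp
qed

lemma admissible_isrlu:
  assumes a: "a > 0"
  shows "admissible_activation (isrlu a)"
proof (rule admissible_activationI_deriv_limits[where D = 1 and z = 1 and r = 1
      and dp = "\<lambda>_. 1" and dm = "isru_derivative a"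
      and la = 1 and lb = 0])
  show "continuous_on UNIV (isrlu a)" unfolding isrlu_eq_max_min[abs_def]
    by (intro continuous_intros continuous_on_compose2[OF continuous_on_isru[OF a]]) auto
  show "mono (isrlu a)" unfolding isrlu_eq_max_min[abs_def]
  proof (intro monoI)
    fix x y :: real assume xy: "x \<le> y"
    have "isru a (min x 0) \<le> isru a (min y 0)" using xy by (intro monoD[OF mono_isru[OF a]]) simp
    then show "max x 0 + isru a (min x 0) \<le> max y 0 + isru a (min y 0)" using xy by linarith
  qed
  have p: "(isrlu a has_real_derivative 1) (at x)" if "x > 0" for x
    by (rule has_field_derivative_transform_within_open[of "\<lambda>x. x" _ _ "{0<..}"])
      (use that in \<open>auto simp: isrlu_def intro!: derivative_eq_intros\<close>)
  show "(isrlu a has_real_derivative 1) (at 1)" by (rule p) simp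
  show "\<And>x. x > 1 \<Longrightarrow> (isrlu a has_real_derivative 1) (at x)" by (rule p) simp
  show "\<And>x. x < - 1 \<Longrightarrow> (isrlu a has_real_derivative isru_derivative a x) (at x)"
    by (rule has_field_derivative_transform_within_open[OF isru_has_real_derivative[OF a],
          where S = "{..<0}"])
      (auto simp: isrlu_def isru_def)
  show "(isru_derivative a \<longlongrightarrow> 0) at_bot" by (rule isru_derivative_tendsto_at_bot[OF a])
qed auto

lemma listed_activation_admissible: "\<rho> \<in> listed_activations \<Longrightarrow> admissible_activation \<rho>"
  unfolding listed_activations_def
  using admissible_relu admissible_elu admissible_softsign admissible_sigmoid admissible_tanh
    admissible_arctan admissible_softplus admissible_prelu admissible_isrlu admissible_isru
  by auto

theorem corollary3p2:
  shows "\<forall>\<rho>\<in>listed_activations.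
     admissible_activation \<rho> \<and>
     (\<forall>(B::real) (\<mu>::(real^'d::finite) measure) (Ns::nat list) (p::real).
        B > 0 \<longrightarrow> sets \<mu> = sets borel \<longrightarrow> finite_measure \<mu> \<longrightarrow>
        emeasure \<mu> (- cube B) = 0 \<longrightarrow> uncountable (support \<mu>) \<longrightarrow>
        Ns \<noteq> [] \<longrightarrow> (\<forall>n\<in>set Ns. n \<ge> 1) \<longrightarrow>
        last Ns \<ge> (if bounded (range \<rho>) then 1 else 2) \<longrightarrow>
        p > 0 \<longrightarrow>
        \<not> Lp_closed \<mu> p (RNN \<rho> Ns))"
proof (intro ballI conjI allI impI)
  fix \<rho> assume "\<rho> \<in> listed_activations"
  then show adm: "admissible_activation \<rho>" by (rule listed_activation_admissible)
  fix B :: real and \<mu> :: "(real^'d::finite) measure" and Ns :: "nat list" and p :: real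
  assume "B > 0" "sets \<mu> = sets borel" "finite_measure \<mu>" "emeasure \<mu> (- cube B) = 0"
    "uncountable (support \<mu>)" "Ns \<noteq> []" "\<forall>n\<in>set Ns. n \<ge> 1"
    "last Ns \<ge> (if bounded (range \<rho>) then 1 else 2)" "p > 0"
  then show "\<not> Lp_closed \<mu> p (RNN \<rho> Ns)"
    using admissible_not_Lp_closed_RNN[OF adm] by blast
qed

end
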